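(* Let $\mathcal{G}$ be a finite tree and let $(v_0,v_1,\dots,v_N)$ be the unique path from $v_0$ to $v_N$, $N\ge 1$. Then the access times of the begrudgingly backtracking random walk satisfy $$\tilde{\mathtt{t}}(v_0,v_N)=\tilde{\mathtt{t}}(v_0,v_1)+\sum_{n=1}^{N-1}\Bigl(\tilde{\mathtt{t}}(v_{n-1}\to v_n,v_{n+1})-1\Bigr).$$
   Context: Begrudgingly backtracking random walk (BBRW): $x_1$ is uniform on the neighbors of $x_0$; for $n\ge0$, given $x_n=i,x_{n+1}=j$, $x_{n+2}$ is uniform on $\mathcal{N}(j)\setminus\{i\}$ if this set is nonempty, and $x_{n+2}=i$ otherwise. For a node $k$, $T_k=\min\{n\ge0:x_n=k\}$. Access times of BBRW: $\tilde{\mathtt{t}}(i,k)=\mathbb{E}[T_k\mid x_0=i]$ and $\tilde{\mathtt{t}}(i\to j,k)=\mathbb{E}[T_k\mid x_0=i,\ x_1=j]$ for $j$ adjacent to $i$. *)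

theory Defs
  imports "HOL-Analysis.Analysis" "HOL-Library.Extended_Nonnegative_Real"
begin

definition nbrs :: "('a \<Rightarrow> 'a \<Rightarrow> bool) \<Rightarrow> 'a \<Rightarrow> 'a set" where
  "nbrs E v = {u. E v u}"

definition is_walk :: "('a \<Rightarrow> 'a \<Rightarrow> bool) \<Rightarrow> 'a list \<Rightarrow> bool" where
  "is_walk E xs \<longleftrightarrow> (\<forall>i. Suc i < length xs \<longrightarrow> E (xs ! i) (xs ! Suc i))"

definition is_cycle :: "('a \<Rightarrow> 'a \<Rightarrow> bool) \<Rightarrow> 'a list \<Rightarrow> bool" where
  "is_cycle E xs \<longleftrightarrow> length xs \<ge> 4 \<and> is_walk E xs \<and> hd xs = last xs \<and> distinct (butlast xs)"

definition finite_tree :: "'a set \<Rightarrow> ('a \<Rightarrow> 'a \<Rightarrow> bool) \<Rightarrow> bool" where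
  "finite_tree V E \<longleftrightarrow> finite V \<and> V \<noteq> {}
     \<and> (\<forall>u v. E u v \<longrightarrow> u \<in> V \<and> v \<in> V)
     \<and> (\<forall>u v. E u v \<longrightarrow> E v u)
     \<and> (\<forall>u. \<not> E u u)
     \<and> (\<forall>u\<in>V. \<forall>v\<in>V. E\<^sup>*\<^sup>* u v)
     \<and> (\<nexists>xs. is_cycle E xs)"

definition step_prob :: "('a \<Rightarrow> 'a \<Rightarrow> bool) \<Rightarrow> 'a \<Rightarrow> 'a \<Rightarrow> 'a \<Rightarrow> real" where
  "step_prob E i j k = (let S = nbrs E j - {i} in
     if S \<noteq> {} then (if k \<in> S then 1 / real (card S) else 0)
     else (if k = i then 1 else 0))"

text \<open>Probability weight of the trajectory x0,x1,...,xn given x0 and x1 (product of steps from time 2 on).\<close>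
fun traj_weight :: "('a \<Rightarrow> 'a \<Rightarrow> bool) \<Rightarrow> 'a list \<Rightarrow> real" where
  "traj_weight E (x # y # z # rest) = step_prob E x y z * traj_weight E (y # z # rest)"
| "traj_weight E _ = 1"

definition bbrw_prob :: "('a \<Rightarrow> 'a \<Rightarrow> bool) \<Rightarrow> 'a list \<Rightarrow> real" where
  "bbrw_prob E xs = (case xs of
      x # y # _ \<Rightarrow> (if E x y then 1 / real (card (nbrs E x)) else 0) * traj_weight E xs
    | _ \<Rightarrow> 1)"

text \<open>P(T_k > n | x0 = i)\<close>
definition surv :: "'a set \<Rightarrow> ('a \<Rightarrow> 'a \<Rightarrow> bool) \<Rightarrow> 'a \<Rightarrow> 'a \<Rightarrow> nat \<Rightarrow> real" where
  "surv V E i k n = (\<Sum>xs\<in>{xs. length xs = Suc n \<and> set xs \<subseteq> V \<and> hd xs = i \<and> k \<notin> set xs}.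
       bbrw_prob E xs)"

text \<open>P(T_k > n | x0 = i, x1 = j)\<close>
definition surv_edge :: "'a set \<Rightarrow> ('a \<Rightarrow> 'a \<Rightarrow> bool) \<Rightarrow> 'a \<Rightarrow> 'a \<Rightarrow> 'a \<Rightarrow> nat \<Rightarrow> real" where
  "surv_edge V E i j k n = (\<Sum>xs\<in>{xs. length xs = Suc n \<and> set xs \<subseteq> V \<and> hd xs = i
        \<and> (2 \<le> length xs \<longrightarrow> xs ! 1 = j) \<and> k \<notin> set xs}.
       traj_weight E xs)"

text \<open>Access times E[T_k | x0 = i] = sum_n P(T_k > n) (valued in [0,\<infinity>]).\<close>
definition access_time :: "'a set \<Rightarrow> ('a \<Rightarrow> 'a \<Rightarrow> bool) \<Rightarrow> 'a \<Rightarrow> 'a \<Rightarrow> ennreal" where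
  "access_time V E i k = (\<Sum>n. ennreal (surv V E i k n))"

definition access_time_edge :: "'a set \<Rightarrow> ('a \<Rightarrow> 'a \<Rightarrow> bool) \<Rightarrow> 'a \<Rightarrow> 'a \<Rightarrow> 'a \<Rightarrow> ennreal" where
  "access_time_edge V E i j k = (\<Sum>n. ennreal (surv_edge V E i j k n))"

end

theory Submission
  imports Defs
begin

(* Write a = v (N - 1), b = v N and c = v (N + 1). In a tree every walk from v 0 to c passes
   through b, and before its first visit to b it can only step onto b from a. Cutting a
   trajectory that avoids c at its first visit to b, the second-order Markov property of the
   BBRW factors its probability into P(T_b = m + 1) times the probability that a walk started
   with the step a -> b avoids c for the remaining steps. Summing over time (a Cauchy product of
   nonnegative series) gives
     t(v 0, c) = t(v 0, b) + (sum_m P(T_b = m + 1)) * (t(a -> b, c) - 1).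
   If t(v 0, b) is finite, b is reached almost surely and the factor is 1; otherwise both sides
   are infinite. Induction along the path yields the formula. *)

section \<open>Walks in acyclic graphs\<close>

lemma is_walk_Nil [simp]: "is_walk E []"
  and is_walk_singleton [simp]: "is_walk E [x]"
  by (auto simp: is_walk_def)

lemma is_walk_Cons_Cons [simp]: "is_walk E (x # y # zs) \<longleftrightarrow> E x y \<and> is_walk E (y # zs)"
  by (auto simp: is_walk_def less_Suc_eq_0_disj)

lemma is_walk_Cons: "is_walk E (x # xs) \<longleftrightarrow> is_walk E xs \<and> (xs \<noteq> [] \<longrightarrow> E x (hd xs))"
  by (cases xs) auto

lemma is_walk_append:
  "is_walk E (xs @ ys) \<longleftrightarrow> is_walk E xs \<and> is_walk E ys \<and> (xs \<noteq> [] \<and> ys \<noteq> [] \<longrightarrow> E (last xs) (hd ys))"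
  by (induction xs rule: induct_list012) (auto simp: is_walk_Cons)

lemma is_walk_rev:
  assumes sym: "\<And>u v. E u v \<Longrightarrow> E v u" and "is_walk E xs"
  shows "is_walk E (rev xs)"
  using assms(2) by (induction xs) (auto simp: is_walk_Cons is_walk_append last_rev intro: sym)

lemma is_walk_take: "is_walk E xs \<Longrightarrow> is_walk E (take k xs)"
  by (metis append_take_drop_id is_walk_append)

lemma is_walk_map_upt:
  assumes "\<And>n. lo \<le> n \<Longrightarrow> Suc n < hi \<Longrightarrow> E (v n) (v (Suc n))"
  shows "is_walk E (map v [lo..<hi])"
  using assms by (auto simp: is_walk_def nth_map nth_upt)

lemma walk_contains_path:
  assumes "is_walk E q" "q \<noteq> []"
  obtains p where "distinct p" "is_walk E p" "p \<noteq> []" "hd p = hd q" "last p = last q" "set p \<subseteq> set q"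
  using assms
proof (induction "length q" arbitrary: q rule: less_induct)
  case less
  show ?case
  proof (cases "distinct q")
    case True
    with less.prems show ?thesis by blast
  next
    case False
    then obtain xs y ys zs where q: "q = xs @ [y] @ ys @ [y] @ zs"
      using not_distinct_decomp by blast
    define r where "r = xs @ [y] @ zs"
    have walk: "is_walk E (xs @ [y] @ ys @ [y] @ zs)"
      using less.prems(2) q by simp
    have "is_walk E (xs @ [y])" "is_walk E (y # zs)"
      using walk is_walk_append[of E "xs @ [y]" "ys @ [y] @ zs"]
        is_walk_append[of E "xs @ [y] @ ys" "y # zs"] by simp_all
    then have "is_walk E r"
      unfolding r_def by (cases zs) (auto simp: is_walk_append)
    moreover have "length r < length q" "r \<noteq> []" "hd r = hd q" "last r = last q" "set r \<subseteq> set q"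
      unfolding q r_def by (cases xs; auto)+
    ultimately show ?thesis
      using less.hyps[of r] less.prems(1) by (metis order.trans)
  qed
qed

text \<open>Two paths with the same end points coincide, otherwise their first branching would
  close a cycle.\<close>

lemma acyclic_path_unique:
  assumes sym: "\<And>u v. E u v \<Longrightarrow> E v u" and acyc: "\<nexists>xs. is_cycle E xs"
  shows "distinct p \<Longrightarrow> is_walk E p \<Longrightarrow> p \<noteq> [] \<Longrightarrow> distinct q \<Longrightarrow> is_walk E q \<Longrightarrow> q \<noteq> []
    \<Longrightarrow> hd p = hd q \<Longrightarrow> last p = last q \<Longrightarrow> p = q"
proof (induction p arbitrary: q)
  case Nil
  then show ?case by simp
next
  case (Cons u p')
  obtain q' where q: "q = u # q'"
    using Cons.prems by (cases q) auto
  show ?case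
  proof (cases "p' = [] \<or> q' = []")
    case True
    then show ?thesis
      using Cons.prems q by (auto dest!: last_in_set) (metis last_in_set)+
  next
    case False
    then obtain x p'' y q'' where p': "p' = x # p''" and q': "q' = y # q''"
      by (meson list.exhaust)
    show ?thesis
    proof (cases "x = y")
      case True
      have "p' = q'"
        using Cons.prems q False True p' q' by (intro Cons.IH) (auto simp: is_walk_Cons)
      then show ?thesis
        using q by simp
    next
      case False
      have "last p' \<in> set q'"
        using Cons.prems q \<open>\<not> (p' = [] \<or> q' = [])\<close> by auto
      then obtain p1 z p2 where ps: "p' = p1 @ z # p2" "z \<in> set q'" "\<forall>w\<in>set p1. w \<notin> set q'"
        using split_list_first_prop[of p' "\<lambda>w. w \<in> set q'"]
        by (metis last_in_set \<open>\<not> (p' = [] \<or> q' = [])\<close>)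
      obtain q1 q2 where qs: "q' = q1 @ z # q2"
        using ps(2) split_list by metis
      define C where "C = (u # p1) @ rev (u # q1 @ [z])"
      have walk_p: "is_walk E (u # p1 @ [z])" and walk_q: "is_walk E (u # q1 @ [z])"
        using Cons.prems(2,5) unfolding ps(1) q qs
        by (metis append_Cons append_assoc append_Nil is_walk_append)+
      then have "is_walk E C"
        unfolding C_def
        using is_walk_append[of E "u # p1" "[z]"] is_walk_rev[OF sym walk_q]
          is_walk_append[of E "u # p1" "rev (u # q1 @ [z])"]
        by simp
      moreover have "length C \<ge> 4"
      proof -
        have "p1 \<noteq> [] \<or> q1 \<noteq> []"
          using False p' q' ps qs by auto
        then show ?thesis
          unfolding C_def by (cases p1; cases q1) auto
      qed
      moreover have "hd C = last C"
        unfolding C_def by simp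
      moreover have "distinct (butlast C)"
        using Cons.prems(1,4) ps qs q unfolding C_def by (auto simp: butlast_append)
      ultimately show ?thesis
        using acyc unfolding is_cycle_def by blast
    qed
  qed
qed

lemma acyclic_path_subset_walk:
  assumes sym: "\<And>u v. E u v \<Longrightarrow> E v u" and acyc: "\<nexists>xs. is_cycle E xs"
    and p: "distinct p" "is_walk E p" "p \<noteq> []"
    and q: "is_walk E q" "q \<noteq> []" "hd q = hd p" "last p \<in> set q"
  shows "set p \<subseteq> set q"
proof -
  obtain j where j: "j < length q" "q ! j = last p"
    using q(4) by (metis in_set_conv_nth)
  define r where "r = take (Suc j) q"
  have r_eq: "r = take j q @ [q ! j]"
    by (simp add: r_def take_Suc_conv_app_nth j)
  have "is_walk E r"
    unfolding r_def using is_walk_take q(1) by blast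
  moreover have "r \<noteq> []" "hd r = hd p"
    using q(2,3) unfolding r_def by (cases q; simp)+
  moreover have "last r = last p" "set r \<subseteq> set q"
    using j unfolding r_eq by (auto simp: r_def set_take_subset dest: in_set_takeD) (metis nth_mem)
  ultimately
  obtain r' where "distinct r'" "is_walk E r'" "r' \<noteq> []" "hd r' = hd p" "last r' = last p"
      "set r' \<subseteq> set q"
    by (metis walk_contains_path order.trans)
  moreover from this have "p = r'"
    using acyclic_path_unique[OF sym acyc] p by metis
  ultimately show ?thesis
    by simp
qed

lemma acyclic_walk_visits_path:
  assumes sym: "\<And>u v. E u v \<Longrightarrow> E v u" and acyc: "\<nexists>xs. is_cycle E xs"
    and path: "\<forall>n<M. E (v n) (v (Suc n))" "inj_on v {0..M}"
    and q: "is_walk E q" "q \<noteq> []" "hd q = v 0" "v M \<in> set q"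
    and "k \<le> M"
  shows "v k \<in> set q"
proof -
  let ?p = "map v [0..<Suc M]"
  have "distinct ?p"
    using path(2) by (simp add: distinct_map atLeastLessThanSuc_atLeastAtMost del: upt_Suc)
  moreover have "is_walk E ?p"
    using path(1) by (intro is_walk_map_upt) simp
  ultimately have "set ?p \<subseteq> set q"
    using q by (intro acyclic_path_subset_walk[OF sym acyc]) (simp_all add: hd_map last_map del: upt_Suc)
  then show ?thesis
    using \<open>k \<le> M\<close> q(4) by (cases "k = M") auto
qed

lemma acyclic_walk_enters_path_end:
  assumes sym: "\<And>u v. E u v \<Longrightarrow> E v u" and acyc: "\<nexists>xs. is_cycle E xs"
    and path: "\<forall>n<M. E (v n) (v (Suc n))" "inj_on v {0..M}" "M \<ge> 1"
    and q: "is_walk E q" "q \<noteq> []" "hd q = v 0" "v M \<notin> set q" "E (last q) (v M)"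
  shows "last q = v (M - 1)"
proof -
  obtain r where r: "distinct r" "is_walk E r" "r \<noteq> []" "hd r = v 0" "last r = last q"
      "set r \<subseteq> set q"
    using walk_contains_path[OF q(1,2)] q(3) by metis
  have path_eq: "map v [0..<Suc M] = map v [0..<M] @ [v M]"
    by simp
  have "r @ [v M] = map v [0..<Suc M]"
  proof (rule acyclic_path_unique[OF sym acyc])
    show "distinct (r @ [v M])" "is_walk E (r @ [v M])"
      using r q(4,5) by (auto simp: is_walk_append)
    show "distinct (map v [0..<Suc M])"
      using path(2) by (simp add: distinct_map atLeastLessThanSuc_atLeastAtMost del: upt_Suc)
    show "is_walk E (map v [0..<Suc M])"
      using path(1) by (intro is_walk_map_upt) simp
    show "hd (r @ [v M]) = hd (map v [0..<Suc M])"
      using r(3,4) by (simp add: hd_map del: upt_Suc)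
  qed (use r in simp_all)
  then have "r = map v [0..<M]"
    unfolding path_eq by simp
  then show ?thesis
    using r(5) path(3) by (simp add: last_map)
qed

section \<open>Trajectory weights\<close>

lemma step_prob_nonneg: "step_prob E x y z \<ge> 0"
  by (simp add: step_prob_def Let_def)

lemma traj_weight_nonneg: "traj_weight E xs \<ge> 0"
  by (induction E xs rule: traj_weight.induct) (auto intro!: mult_nonneg_nonneg step_prob_nonneg)

lemma bbrw_prob_nonneg: "bbrw_prob E xs \<ge> 0"
  by (auto simp: bbrw_prob_def split: list.splits intro!: divide_nonneg_nonneg traj_weight_nonneg)

lemma traj_weight_Cons:
  "length ys \<ge> 2 \<Longrightarrow> traj_weight E (a # ys) = step_prob E a (ys ! 0) (ys ! 1) * traj_weight E ys"
  by (cases ys rule: remdups_adj.cases) auto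

lemma traj_weight_append:
  "traj_weight E (xs @ x # y # rest) = traj_weight E (xs @ [x, y]) * traj_weight E (x # y # rest)"
proof (induction xs)
  case Nil
  then show ?case by simp
next
  case (Cons a xs)
  have "(xs @ x # y # rest) ! 0 = (xs @ [x, y]) ! 0" "(xs @ x # y # rest) ! 1 = (xs @ [x, y]) ! 1"
    by (cases xs rule: remdups_adj.cases; simp)+
  then show ?case
    using Cons traj_weight_Cons[of "xs @ x # y # rest" E a] traj_weight_Cons[of "xs @ [x, y]" E a]
    by simp
qed

lemma bbrw_prob_eq:
  "length xs \<ge> 2 \<Longrightarrow>
   bbrw_prob E xs = (if E (xs ! 0) (xs ! 1) then 1 / real (card (nbrs E (xs ! 0))) else 0) * traj_weight E xs"
  by (cases xs rule: remdups_adj.cases) (auto simp: bbrw_prob_def)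

text \<open>The second-order Markov property: after the step from \<open>last pre\<close> to \<open>y\<close>, the walk
  continues as one started with that step.\<close>

lemma bbrw_prob_append:
  assumes "pre \<noteq> []"
  shows "bbrw_prob E (pre @ y # rest) = bbrw_prob E (pre @ [y]) * traj_weight E (last pre # y # rest)"
proof -
  obtain ys x where pre: "pre = ys @ [x]"
    using assms by (metis append_butlast_last_id)
  have "(pre @ y # rest) ! 0 = (pre @ [y]) ! 0" "(pre @ y # rest) ! 1 = (pre @ [y]) ! 1"
    unfolding pre by (cases ys rule: remdups_adj.cases; simp)+
  moreover have "traj_weight E (pre @ y # rest) = traj_weight E (pre @ [y]) * traj_weight E (x # y # rest)"
    unfolding pre using traj_weight_append[of E ys x y rest] traj_weight_append[of E ys x y "[]"] by simp
  ultimately show ?thesis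
    using bbrw_prob_eq[of "pre @ y # rest" E] bbrw_prob_eq[of "pre @ [y]" E] assms pre by simp
qed

lemma traj_weight_nonzero_walk:
  assumes sym: "\<And>u v. E u v \<Longrightarrow> E v u"
  shows "E x y \<Longrightarrow> traj_weight E (x # y # rest) \<noteq> 0 \<Longrightarrow> is_walk E (x # y # rest)"
proof (induction rest arbitrary: x y)
  case Nil
  then show ?case by simp
next
  case (Cons z rest)
  have step: "step_prob E x y z \<noteq> 0" and tail: "traj_weight E (y # z # rest) \<noteq> 0"
    using Cons.prems by auto
  have "E y z"
  proof (cases "nbrs E y - {x} = {}")
    case True
    then have "z = x"
      using step by (auto simp: step_prob_def Let_def split: if_splits)
    then show ?thesis
      using sym[OF Cons.prems(1)] by simp
  next
    case False
    then show ?thesis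
      using step by (auto simp: step_prob_def Let_def nbrs_def split: if_splits)
  qed
  then show ?case
    using Cons.IH[OF _ tail] Cons.prems by simp
qed

lemma bbrw_prob_nonzero_walk:
  assumes sym: "\<And>u v. E u v \<Longrightarrow> E v u" and "bbrw_prob E xs \<noteq> 0"
  shows "is_walk E xs"
proof (cases xs rule: remdups_adj.cases)
  case (3 x y rest)
  then have "E x y" "traj_weight E (x # y # rest) \<noteq> 0"
    using assms(2) by (auto simp: bbrw_prob_def split: if_splits)
  then show ?thesis
    unfolding 3 using traj_weight_nonzero_walk[of E, OF sym] by blast
qed auto

lemma sum_step_prob:
  assumes "finite V" "x \<in> V" "nbrs E y \<subseteq> V"
  shows "(\<Sum>z\<in>V. step_prob E x y z) = 1"
proof (cases "nbrs E y - {x} = {}")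
  case True
  then show ?thesis
    using assms by (simp add: step_prob_def Let_def sum.delta)
next
  case False
  let ?S = "nbrs E y - {x}"
  have "finite ?S"
    using assms finite_subset by blast
  have "(\<Sum>z\<in>V. step_prob E x y z) = (\<Sum>z\<in>V. if z \<in> ?S then 1 / real (card ?S) else 0)"
    using False by (simp add: step_prob_def Let_def)
  also have "\<dots> = (\<Sum>z\<in>?S. 1 / real (card ?S))"
  proof -
    have "V \<inter> {xa \<in> nbrs E y. xa \<noteq> x} = ?S"
      using assms by auto
    then show ?thesis
      using assms by (subst sum.If_cases) auto
  qed
  also have "\<dots> = 1"
    using False \<open>finite ?S\<close> by simp
  finally show ?thesis .
qed

lemma sum_bbrw_prob_snoc:
  assumes finV: "finite V" and inV: "\<And>u v. E u v \<Longrightarrow> u \<in> V \<and> v \<in> V"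
    and xs: "xs \<noteq> []" "set xs \<subseteq> V" and nb: "nbrs E (hd xs) \<noteq> {}"
  shows "(\<Sum>z\<in>V. bbrw_prob E (xs @ [z])) = bbrw_prob E xs"
proof (cases "length xs \<ge> 2")
  case False
  then obtain x where x: "xs = [x]"
    using xs by (cases xs rule: remdups_adj.cases) auto
  have sub: "nbrs E x \<subseteq> V"
    using inV by (auto simp: nbrs_def)
  then have fin: "finite (nbrs E x)"
    using finV finite_subset by blast
  have "(\<Sum>z\<in>V. bbrw_prob E (xs @ [z])) = (\<Sum>z\<in>V. if z \<in> nbrs E x then 1 / real (card (nbrs E x)) else 0)"
    unfolding x by (intro sum.cong) (auto simp: bbrw_prob_def nbrs_def)
  also have "\<dots> = (\<Sum>z\<in>nbrs E x. 1 / real (card (nbrs E x)))"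
    using sub finV by (subst sum.If_cases) (auto simp: Int_absorb1)
  also have "\<dots> = 1"
    using nb fin x by simp
  finally show ?thesis
    using x by (simp add: bbrw_prob_def)
next
  case True
  obtain pre y where pre: "xs = pre @ [y]"
    using xs by (metis append_butlast_last_id)
  have "pre \<noteq> []"
    using True pre by auto
  have "bbrw_prob E (xs @ [z]) = bbrw_prob E xs * step_prob E (last pre) y z" for z
    using bbrw_prob_append[OF \<open>pre \<noteq> []\<close>, of E y "[z]"] unfolding pre by simp
  then have "(\<Sum>z\<in>V. bbrw_prob E (xs @ [z])) = (\<Sum>z\<in>V. bbrw_prob E xs * step_prob E (last pre) y z)"
    by simp
  also have "\<dots> = bbrw_prob E xs * (\<Sum>z\<in>V. step_prob E (last pre) y z)"
    by (simp add: sum_distrib_left)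
  also have "(\<Sum>z\<in>V. step_prob E (last pre) y z) = 1"
    using \<open>pre \<noteq> []\<close> xs pre inV finV by (intro sum_step_prob) (auto simp: nbrs_def)
  finally show ?thesis
    by (simp only: mult_1_right)
qed

section \<open>Double series of extended nonnegative reals\<close>

lemma suminf_commute_ennreal:
  fixes f :: "nat \<Rightarrow> nat \<Rightarrow> ennreal"
  shows "(\<Sum>m. \<Sum>n. f m n) = (\<Sum>n. \<Sum>m. f m n)"
proof -
  have "(\<Sum>m. \<Sum>n. f m n) = (\<integral>\<^sup>+m. \<integral>\<^sup>+n. f m n \<partial>count_space UNIV \<partial>count_space UNIV)"
    by (simp add: nn_integral_count_space_nat)
  also have "\<dots> = (\<integral>\<^sup>+n. \<integral>\<^sup>+m. f m n \<partial>count_space UNIV \<partial>count_space UNIV)"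
    by (rule nn_integral_count_space_nn_integral) auto
  also have "\<dots> = (\<Sum>n. \<Sum>m. f m n)"
    by (simp add: nn_integral_count_space_nat)
  finally show ?thesis .
qed

lemma suminf_split_head_ennreal:
  fixes f :: "nat \<Rightarrow> ennreal"
  shows "(\<Sum>n. f n) = f 0 + (\<Sum>n. f (Suc n))"
  using suminf_offset[of f 1] by (simp add: summableI add.commute)

lemma suminf_convolution_ennreal:
  fixes H F :: "nat \<Rightarrow> ennreal"
  shows "(\<Sum>n. \<Sum>m<n. H m * F (n - m)) = (\<Sum>m. H m) * (\<Sum>k. F (Suc k))"
proof -
  have "(\<Sum>n. \<Sum>m<n. H m * F (n - m)) = (\<Sum>n. \<Sum>m. if m < n then H m * F (n - m) else 0)"
  proof (rule suminf_cong)
    fix n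
    have "(\<Sum>m. if m < n then H m * F (n - m) else 0) = (\<Sum>m<n. if m < n then H m * F (n - m) else 0)"
      by (rule suminf_finite) auto
    then show "(\<Sum>m<n. H m * F (n - m)) = (\<Sum>m. if m < n then H m * F (n - m) else 0)"
      by simp
  qed
  also have "\<dots> = (\<Sum>m. \<Sum>n. if m < n then H m * F (n - m) else 0)"
    by (rule suminf_commute_ennreal[symmetric])
  also have "\<dots> = (\<Sum>m. H m * (\<Sum>k. F (Suc k)))"
  proof (rule suminf_cong)
    fix m
    have "(\<Sum>n. if m < n then H m * F (n - m) else 0) = (\<Sum>k. H m * F (Suc k))"
      using suminf_offset[of "\<lambda>n. if m < n then H m * F (n - m) else 0" "Suc m"]
      by (simp add: summableI Suc_diff_le)
    then show "(\<Sum>n. if m < n then H m * F (n - m) else 0) = H m * (\<Sum>k. F (Suc k))"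
      by simp
  qed
  also have "\<dots> = (\<Sum>m. H m) * (\<Sum>k. F (Suc k))"
    by simp
  finally show ?thesis .
qed

section \<open>Survival probabilities\<close>

definition avoiding_trajs :: "'a set \<Rightarrow> 'a \<Rightarrow> 'a \<Rightarrow> nat \<Rightarrow> 'a list set" where
  "avoiding_trajs V i k n = {xs. length xs = Suc n \<and> set xs \<subseteq> V \<and> hd xs = i \<and> k \<notin> set xs}"

text \<open>The probability \<open>P(T\<^sub>k = n + 1 | x\<^sub>0 = i)\<close>.\<close>

definition first_hit_prob :: "'a set \<Rightarrow> ('a \<Rightarrow> 'a \<Rightarrow> bool) \<Rightarrow> 'a \<Rightarrow> 'a \<Rightarrow> nat \<Rightarrow> real" where
  "first_hit_prob V E i k n = (\<Sum>p\<in>avoiding_trajs V i k n. bbrw_prob E (p @ [k]))"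

lemma surv_eq_sum_avoiding_trajs: "surv V E i k n = sum (bbrw_prob E) (avoiding_trajs V i k n)"
  by (simp add: surv_def avoiding_trajs_def)

lemma finite_avoiding_trajs: "finite V \<Longrightarrow> finite (avoiding_trajs V i k n)"
  by (rule finite_subset[OF _ finite_lists_length_eq[of V "Suc n"]]) (auto simp: avoiding_trajs_def)

lemma avoiding_trajs_nonempty: "p \<in> avoiding_trajs V i k n \<Longrightarrow> p \<noteq> []"
  by (auto simp: avoiding_trajs_def)

lemma surv_nonneg: "surv V E i k n \<ge> 0"
  unfolding surv_def by (intro sum_nonneg bbrw_prob_nonneg)

lemma surv_edge_nonneg: "surv_edge V E i j k n \<ge> 0"
  unfolding surv_edge_def by (intro sum_nonneg traj_weight_nonneg)

lemma first_hit_prob_nonneg: "first_hit_prob V E i k n \<ge> 0"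
  unfolding first_hit_prob_def by (intro sum_nonneg bbrw_prob_nonneg)

lemma surv_0:
  assumes "i \<in> V" "i \<noteq> k"
  shows "surv V E i k 0 = 1"
proof -
  have "avoiding_trajs V i k 0 = {[i]}"
    using assms by (auto simp: avoiding_trajs_def length_Suc_conv)
  then show ?thesis
    by (simp add: surv_eq_sum_avoiding_trajs bbrw_prob_def)
qed

lemma surv_eq_surv_Suc_add_first_hit_prob:
  assumes "finite V" and "\<And>u v. E u v \<Longrightarrow> u \<in> V \<and> v \<in> V"
    and "k \<in> V" and "nbrs E i \<noteq> {}"
  shows "surv V E i k n = surv V E i k (Suc n) + first_hit_prob V E i k n"
proof -
  let ?A = "avoiding_trajs V i k n"
  have img: "avoiding_trajs V i k (Suc n) = (\<lambda>(p, z). p @ [z]) ` (?A \<times> (V - {k}))"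
  proof (intro equalityI subsetI)
    fix xs
    assume xs: "xs \<in> avoiding_trajs V i k (Suc n)"
    then obtain p z where xs_eq: "xs = p @ [z]" and "length p = Suc n"
      unfolding avoiding_trajs_def by (metis (mono_tags, lifting) append_butlast_last_id
        length_butlast diff_Suc_1 list.size(3) mem_Collect_eq nat.distinct(1))
    then have "p \<in> ?A" "z \<in> V - {k}"
      using xs by (auto simp: avoiding_trajs_def hd_append)
    then show "xs \<in> (\<lambda>(p, z). p @ [z]) ` (?A \<times> (V - {k}))"
      unfolding xs_eq by (intro image_eqI[where x = "(p, z)"]) auto
  next
    fix xs
    assume "xs \<in> (\<lambda>(p, z). p @ [z]) ` (?A \<times> (V - {k}))"
    then obtain p z where "xs = p @ [z]" "p \<in> ?A" "z \<in> V - {k}"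
      by auto
    then show "xs \<in> avoiding_trajs V i k (Suc n)"
      using avoiding_trajs_nonempty[of p] by (auto simp: avoiding_trajs_def)
  qed
  have "surv V E i k n = (\<Sum>p\<in>?A. \<Sum>z\<in>V. bbrw_prob E (p @ [z]))"
    unfolding surv_eq_sum_avoiding_trajs using assms
    by (intro sum.cong refl sum_bbrw_prob_snoc[symmetric]) (auto simp: avoiding_trajs_def)
  also have "\<dots> = (\<Sum>p\<in>?A. bbrw_prob E (p @ [k]) + (\<Sum>z\<in>V - {k}. bbrw_prob E (p @ [z])))"
    using assms by (intro sum.cong refl sum.remove)
  also have "\<dots> = first_hit_prob V E i k n + (\<Sum>(p, z)\<in>?A \<times> (V - {k}). bbrw_prob E (p @ [z]))"
    by (simp add: first_hit_prob_def sum.distrib sum.cartesian_product)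
  also have "(\<Sum>(p, z)\<in>?A \<times> (V - {k}). bbrw_prob E (p @ [z])) = surv V E i k (Suc n)"
    unfolding surv_eq_sum_avoiding_trajs img
    by (subst sum.reindex) (auto simp: inj_on_def case_prod_unfold)
  finally show ?thesis
    by simp
qed

lemma sum_first_hit_prob:
  assumes "finite V" "\<And>u v. E u v \<Longrightarrow> u \<in> V \<and> v \<in> V"
    and "i \<in> V" "k \<in> V" "i \<noteq> k" "nbrs E i \<noteq> {}"
  shows "(\<Sum>m<n. first_hit_prob V E i k m) = 1 - surv V E i k n"
proof (induction n)
  case 0
  show ?case
    using assms(3,5) by (simp add: surv_0)
next
  case (Suc n)
  then show ?case
    using surv_eq_surv_Suc_add_first_hit_prob[OF assms(1,2,4,6), of n] by simp
qed

lemma first_hit_prob_sums_1: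
  assumes "finite V" "\<And>u v. E u v \<Longrightarrow> u \<in> V \<and> v \<in> V"
    and "i \<in> V" "k \<in> V" "i \<noteq> k" "nbrs E i \<noteq> {}"
    and "access_time V E i k \<noteq> \<infinity>"
  shows "first_hit_prob V E i k sums 1"
proof -
  have "summable (surv V E i k)"
    using assms(7) unfolding access_time_def by (intro summable_suminf_not_top surv_nonneg) simp
  then have "(\<lambda>n. 1 - surv V E i k n) \<longlonglongrightarrow> 1 - 0"
    by (intro tendsto_intros summable_LIMSEQ_zero)
  then show ?thesis
    using sum_first_hit_prob[OF assms(1-6)] by (simp add: sums_def)
qed

lemma surv_edge_0:
  assumes "a \<in> V" "a \<noteq> c"
  shows "surv_edge V E a b c 0 = 1"
proof -
  have "{xs. length xs = Suc 0 \<and> set xs \<subseteq> V \<and> hd xs = a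
        \<and> (2 \<le> length xs \<longrightarrow> xs ! 1 = b) \<and> c \<notin> set xs} = {[a]}"
    using assms by (auto simp: length_Suc_conv)
  then show ?thesis
    by (simp add: surv_edge_def)
qed

lemma surv_edge_Suc:
  assumes "a \<in> V" "b \<in> V" "a \<noteq> c" "b \<noteq> c"
  shows "surv_edge V E a b c (Suc n) = (\<Sum>q\<in>{q. length q = n \<and> set q \<subseteq> V - {c}}. traj_weight E (a # b # q))"
proof -
  have img: "{xs. length xs = Suc (Suc n) \<and> set xs \<subseteq> V \<and> hd xs = a
        \<and> (2 \<le> length xs \<longrightarrow> xs ! 1 = b) \<and> c \<notin> set xs}
      = (\<lambda>q. a # b # q) ` {q. length q = n \<and> set q \<subseteq> V - {c}}"
  proof (intro equalityI subsetI)
    fix xs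
    assume xs: "xs \<in> {xs. length xs = Suc (Suc n) \<and> set xs \<subseteq> V \<and> hd xs = a
        \<and> (2 \<le> length xs \<longrightarrow> xs ! 1 = b) \<and> c \<notin> set xs}"
    then obtain x y q where "xs = x # y # q"
      by (cases xs rule: remdups_adj.cases) auto
    with xs show "xs \<in> (\<lambda>q. a # b # q) ` {q. length q = n \<and> set q \<subseteq> V - {c}}"
      by auto
  qed (use assms in auto)
  then show ?thesis
    unfolding surv_edge_def img by (subst sum.reindex) (auto simp: inj_on_def)
qed

lemma access_time_edge_eq:
  assumes "a \<in> V" "a \<noteq> c"
  shows "access_time_edge V E a b c = 1 + (\<Sum>n. ennreal (surv_edge V E a b c (Suc n)))"
  unfolding access_time_edge_def
  by (subst suminf_split_head_ennreal) (simp add: surv_edge_0[OF assms])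

section \<open>Passing through a gate vertex\<close>

lemma takeWhile_neq_append_Cons: "b \<notin> set p \<Longrightarrow> takeWhile (\<lambda>x. x \<noteq> b) (p @ b # q) = p"
  by (induction p) auto

locale bbrw_gate =
  fixes V :: "'a set" and E :: "'a \<Rightarrow> 'a \<Rightarrow> bool" and i a b c :: 'a
  assumes finite_V: "finite V"
    and edges_in_V: "\<And>u v. E u v \<Longrightarrow> u \<in> V \<and> v \<in> V"
    and sym: "\<And>u v. E u v \<Longrightarrow> E v u"
    and i_in_V: "i \<in> V" and nbrs_i: "nbrs E i \<noteq> {}"
    and edge_ab: "E a b"
    and i_ne_b: "i \<noteq> b" and a_ne_c: "a \<noteq> c" and b_ne_c: "b \<noteq> c"
    and gate_separates: "\<And>q. is_walk E q \<Longrightarrow> q \<noteq> [] \<Longrightarrow> hd q = i \<Longrightarrow> b \<notin> set q \<Longrightarrow> c \<notin> set q"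
    and gate_entered_from: "\<And>q. is_walk E q \<Longrightarrow> q \<noteq> [] \<Longrightarrow> hd q = i \<Longrightarrow> b \<notin> set q
      \<Longrightarrow> E (last q) b \<Longrightarrow> last q = a"
begin

lemma a_in_V: "a \<in> V" and b_in_V: "b \<in> V"
  using edges_in_V[OF edge_ab] by auto

lemma bbrw_prob_snoc_gate_eq_0:
  assumes "p \<in> avoiding_trajs V i b m" "c \<in> set p"
  shows "bbrw_prob E (p @ [b]) = 0"
proof (rule ccontr)
  assume "bbrw_prob E (p @ [b]) \<noteq> 0"
  then have "is_walk E (p @ [b])"
    using bbrw_prob_nonzero_walk[of E, OF sym] by blast
  then have "is_walk E p"
    using is_walk_append by blast
  moreover have "p \<noteq> []" "hd p = i" "b \<notin> set p"
    using assms(1) by (auto simp: avoiding_trajs_def)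
  ultimately show False
    using gate_separates assms(2) by blast
qed

lemma first_hit_prob_gate:
  "first_hit_prob V E i b m = (\<Sum>p\<in>{p \<in> avoiding_trajs V i b m. c \<notin> set p}. bbrw_prob E (p @ [b]))"
  unfolding first_hit_prob_def
  by (rule sum.mono_neutral_right[OF finite_avoiding_trajs[OF finite_V]])
    (auto intro: bbrw_prob_snoc_gate_eq_0)

lemma bbrw_prob_through_gate:
  assumes p: "p \<in> avoiding_trajs V i b m"
  shows "bbrw_prob E (p @ b # q) = bbrw_prob E (p @ [b]) * traj_weight E (a # b # q)"
proof (cases "bbrw_prob E (p @ [b]) = 0")
  case True
  then show ?thesis
    using bbrw_prob_append[OF avoiding_trajs_nonempty[OF p], of E b q] by simp
next
  case False
  then have "is_walk E (p @ [b])"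
    using bbrw_prob_nonzero_walk[of E, OF sym] by blast
  then have "is_walk E p" "E (last p) b"
    using avoiding_trajs_nonempty[OF p] by (auto simp: is_walk_append)
  then have "last p = a"
    using gate_entered_from[of p] p avoiding_trajs_nonempty[OF p] by (auto simp: avoiding_trajs_def)
  then show ?thesis
    using bbrw_prob_append[OF avoiding_trajs_nonempty[OF p], of E b q] by simp
qed

lemma sum_avoiding_trajs_not_gate:
  "sum (bbrw_prob E) {xs \<in> avoiding_trajs V i c n. b \<notin> set xs} = surv V E i b n"
  unfolding surv_eq_sum_avoiding_trajs
proof (rule sum.mono_neutral_left[OF finite_avoiding_trajs[OF finite_V]])
  show "{xs \<in> avoiding_trajs V i c n. b \<notin> set xs} \<subseteq> avoiding_trajs V i b n"
    by (auto simp: avoiding_trajs_def)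
  show "\<forall>xs\<in>avoiding_trajs V i b n - {xs \<in> avoiding_trajs V i c n. b \<notin> set xs}. bbrw_prob E xs = 0"
  proof (intro ballI, rule ccontr)
    fix xs
    assume xs: "xs \<in> avoiding_trajs V i b n - {xs \<in> avoiding_trajs V i c n. b \<notin> set xs}"
      and "bbrw_prob E xs \<noteq> 0"
    then have "is_walk E xs"
      using bbrw_prob_nonzero_walk[of E, OF sym] by blast
    moreover have "c \<in> set xs" "xs \<noteq> []" "hd xs = i" "b \<notin> set xs"
      using xs by (auto simp: avoiding_trajs_def)
    ultimately show False
      using gate_separates by blast
  qed
qed

text \<open>For a list \<open>xs\<close> containing \<open>b\<close>, \<open>length (takeWhile (\<lambda>x. x \<noteq> b) xs)\<close> is the time of
  its first visit to \<open>b\<close>.\<close>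

lemma first_visit_trajs_eq:
  assumes "m < n"
  shows "{xs \<in> avoiding_trajs V i c n. b \<in> set xs \<and> length (takeWhile (\<lambda>x. x \<noteq> b) xs) = Suc m}
    = (\<lambda>(p, q). p @ b # q) `
        ({p \<in> avoiding_trajs V i b m. c \<notin> set p} \<times> {q. length q = n - Suc m \<and> set q \<subseteq> V - {c}})"
    (is "?L = ?R")
proof (intro equalityI subsetI)
  fix xs
  assume xs: "xs \<in> ?L"
  then obtain p q where pq: "xs = p @ b # q" "b \<notin> set p"
    using split_list_first by (metis (mono_tags, lifting) mem_Collect_eq)
  have "length p = Suc m"
    using xs pq by (simp add: takeWhile_neq_append_Cons)
  moreover have "p \<noteq> []"
    using calculation by auto
  ultimately show "xs \<in> ?R"
    using xs pq by (intro image_eqI[where x = "(p, q)"]) (auto simp: avoiding_trajs_def)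
next
  fix xs
  assume "xs \<in> ?R"
  then obtain p q where pq: "xs = p @ b # q" "p \<in> avoiding_trajs V i b m" "c \<notin> set p"
      "length q = n - Suc m" "set q \<subseteq> V - {c}"
    by auto
  then show "xs \<in> ?L"
    using assms b_in_V b_ne_c avoiding_trajs_nonempty[OF pq(2)]
    by (auto simp: avoiding_trajs_def takeWhile_neq_append_Cons)
qed

lemma sum_first_visit_trajs:
  assumes "m < n"
  shows "sum (bbrw_prob E) {xs \<in> avoiding_trajs V i c n. b \<in> set xs \<and> length (takeWhile (\<lambda>x. x \<noteq> b) xs) = Suc m}
    = first_hit_prob V E i b m * surv_edge V E a b c (n - m)"
proof -
  let ?P = "{p \<in> avoiding_trajs V i b m. c \<notin> set p}"
  let ?Q = "{q. length q = n - Suc m \<and> set q \<subseteq> V - {c}}"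
  have "inj_on (\<lambda>(p, q). p @ b # q) (?P \<times> ?Q)"
  proof (rule inj_onI)
    fix x y
    assume "x \<in> ?P \<times> ?Q" "y \<in> ?P \<times> ?Q" "(\<lambda>(p, q). p @ b # q) x = (\<lambda>(p, q). p @ b # q) y"
    moreover obtain p q p' q' where x_y: "x = (p, q)" "y = (p', q')"
      by fastforce
    ultimately have "b \<notin> set p" "b \<notin> set p'" and eq: "p @ b # q = p' @ b # q'"
      by (auto simp: avoiding_trajs_def)
    then have "p = p'"
      using takeWhile_neq_append_Cons by metis
    then show "x = y"
      using eq unfolding x_y by simp
  qed
  then have "sum (bbrw_prob E) {xs \<in> avoiding_trajs V i c n. b \<in> set xs \<and> length (takeWhile (\<lambda>x. x \<noteq> b) xs) = Suc m}
      = (\<Sum>p\<in>?P. \<Sum>q\<in>?Q. bbrw_prob E (p @ b # q))"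
    unfolding first_visit_trajs_eq[OF assms]
    by (simp add: sum.reindex sum.cartesian_product case_prod_unfold)
  also have "\<dots> = (\<Sum>p\<in>?P. \<Sum>q\<in>?Q. bbrw_prob E (p @ [b]) * traj_weight E (a # b # q))"
    by (intro sum.cong refl bbrw_prob_through_gate[of _ m]) simp
  also have "\<dots> = first_hit_prob V E i b m * surv_edge V E a b c (n - m)"
    using assms a_in_V b_in_V a_ne_c b_ne_c
    by (simp add: first_hit_prob_gate sum_product surv_edge_Suc flip: Suc_diff_Suc)
  finally show ?thesis .
qed

lemma surv_through_gate:
  "surv V E i c n = surv V E i b n + (\<Sum>m<n. first_hit_prob V E i b m * surv_edge V E a b c (n - m))"
proof -
  let ?A = "avoiding_trajs V i c n"
  let ?B = "{xs \<in> ?A. b \<in> set xs}"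
  let ?first_visit = "\<lambda>xs. length (takeWhile (\<lambda>x. x \<noteq> b) xs) - 1"
  have takeWhile_pos: "length (takeWhile (\<lambda>x. x \<noteq> b) xs) > 0" if "xs \<in> ?A" for xs
    using that i_ne_b by (cases xs) (auto simp: avoiding_trajs_def)
  have takeWhile_less: "length (takeWhile (\<lambda>x. x \<noteq> b) xs) < length xs" if "b \<in> set xs" for xs
    using that by (induction xs) auto
  have "{xs \<in> ?A. b \<notin> set xs} = ?A \<inter> {xs. b \<notin> set xs}" "?B = ?A - {xs. b \<notin> set xs}"
    by auto
  then have "surv V E i c n = sum (bbrw_prob E) {xs \<in> ?A. b \<notin> set xs} + sum (bbrw_prob E) ?B"
    unfolding surv_eq_sum_avoiding_trajs using sum.Int_Diff[OF finite_avoiding_trajs[OF finite_V]]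
    by metis
  also have "sum (bbrw_prob E) ?B = (\<Sum>m<n. sum (bbrw_prob E) {xs \<in> ?B. ?first_visit xs = m})"
  proof (rule sum.group[symmetric])
    show "finite ?B"
      using finite_avoiding_trajs[OF finite_V] by simp
    show "?first_visit ` ?B \<subseteq> {..<n}"
    proof (rule image_subsetI)
      fix xs
      assume xs: "xs \<in> ?B"
      then have "length (takeWhile (\<lambda>x. x \<noteq> b) xs) < Suc n"
        using takeWhile_less[of xs] by (simp add: avoiding_trajs_def)
      moreover have "length (takeWhile (\<lambda>x. x \<noteq> b) xs) > 0"
        using takeWhile_pos xs by blast
      ultimately show "?first_visit xs \<in> {..<n}"
        by (simp del: length_greater_0_conv)
    qed
  qed simp
  also have "\<dots> = (\<Sum>m<n. first_hit_prob V E i b m * surv_edge V E a b c (n - m))"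
  proof (intro sum.cong refl)
    fix m
    assume "m \<in> {..<n}"
    moreover have "{xs \<in> ?B. ?first_visit xs = m}
        = {xs \<in> ?A. b \<in> set xs \<and> length (takeWhile (\<lambda>x. x \<noteq> b) xs) = Suc m}"
      using takeWhile_pos by fastforce
    ultimately show "sum (bbrw_prob E) {xs \<in> ?B. ?first_visit xs = m}
        = first_hit_prob V E i b m * surv_edge V E a b c (n - m)"
      using sum_first_visit_trajs by simp
  qed
  finally show ?thesis
    by (simp add: sum_avoiding_trajs_not_gate)
qed

lemma access_time_through_gate:
  "access_time V E i c = access_time V E i b + (access_time_edge V E a b c - 1)"
proof -
  let ?H = "\<lambda>m. ennreal (first_hit_prob V E i b m)"
  let ?F = "\<lambda>k. ennreal (surv_edge V E a b c k)"
  have "access_time V E i c = (\<Sum>n. ennreal (surv V E i b n) + (\<Sum>m<n. ?H m * ?F (n - m)))"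
    unfolding access_time_def surv_through_gate
    by (simp add: ennreal_plus surv_nonneg sum_nonneg first_hit_prob_nonneg surv_edge_nonneg
        sum_ennreal[symmetric] ennreal_mult)
  also have "\<dots> = access_time V E i b + (\<Sum>n. \<Sum>m<n. ?H m * ?F (n - m))"
    unfolding access_time_def by (rule suminf_add[symmetric]) (rule summableI)+
  also have "\<dots> = access_time V E i b + (\<Sum>m. ?H m) * (\<Sum>k. ?F (Suc k))"
    using suminf_convolution_ennreal[of ?H ?F] by simp
  also have "(\<Sum>k. ?F (Suc k)) = access_time_edge V E a b c - 1"
    using access_time_edge_eq[OF a_in_V a_ne_c] by simp
  finally have decomposition:
    "access_time V E i c = access_time V E i b + (\<Sum>m. ?H m) * (access_time_edge V E a b c - 1)" .
  show ?thesis
  proof (cases "access_time V E i b = \<infinity>")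
    case True
    then show ?thesis
      using decomposition by simp
  next
    case False
    then have "first_hit_prob V E i b sums 1"
      using finite_V edges_in_V i_in_V b_in_V i_ne_b nbrs_i by (intro first_hit_prob_sums_1)
    then have "(\<Sum>m. ?H m) = 1"
      using suminf_ennreal2[of "first_hit_prob V E i b", OF first_hit_prob_nonneg]
      by (simp add: sums_iff)
    then show ?thesis
      using decomposition by simp
  qed
qed

end

lemma access_time_path_Suc:
  assumes tree: "finite_tree V E"
    and "N \<ge> 1"
    and path_V: "\<forall>n\<le>Suc N. v n \<in> V"
    and path_E: "\<forall>n<Suc N. E (v n) (v (Suc n))"
    and path_inj: "inj_on v {0..Suc N}"
  shows "access_time V E (v 0) (v (Suc N))
    = access_time V E (v 0) (v N) + (access_time_edge V E (v (N - 1)) (v N) (v (Suc N)) - 1)"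
proof -
  have sym: "\<And>u w. E u w \<Longrightarrow> E w u" and acyc: "\<nexists>xs. is_cycle E xs"
    using tree unfolding finite_tree_def by blast+
  have v_eq_iff: "v x = v y \<longleftrightarrow> x = y" if "x \<le> Suc N" "y \<le> Suc N" for x y
    using path_inj that by (auto simp: inj_on_def)
  interpret bbrw_gate V E "v 0" "v (N - 1)" "v N" "v (Suc N)"
  proof
    show "finite V" "\<And>u w. E u w \<Longrightarrow> u \<in> V \<and> w \<in> V" "\<And>u w. E u w \<Longrightarrow> E w u"
      using tree unfolding finite_tree_def by blast+
    show "v 0 \<in> V" "nbrs E (v 0) \<noteq> {}"
      using path_V path_E by (auto simp: nbrs_def)
    show "E (v (N - 1)) (v N)"
      using path_E[rule_format, of "N - 1"] \<open>N \<ge> 1\<close> by simp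
    show "v 0 \<noteq> v N" "v (N - 1) \<noteq> v (Suc N)" "v N \<noteq> v (Suc N)"
      using \<open>N \<ge> 1\<close> by (simp_all add: v_eq_iff)
  next
    fix q
    assume "is_walk E q" "q \<noteq> []" "hd q = v 0" "v N \<notin> set q"
    then show "v (Suc N) \<notin> set q"
      using acyclic_walk_visits_path[OF sym acyc path_E path_inj, of q N] by auto
  next
    fix q
    assume "is_walk E q" "q \<noteq> []" "hd q = v 0" "v N \<notin> set q" "E (last q) (v N)"
    moreover have "\<forall>n<N. E (v n) (v (Suc n))" "inj_on v {0..N}"
      using path_E inj_on_subset[OF path_inj] by auto
    ultimately show "last q = v (N - 1)"
      using acyclic_walk_enters_path_end[OF sym acyc _ _ \<open>N \<ge> 1\<close>] by blast
  qed
  show ?thesis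
    by (rule access_time_through_gate)
qed

theorem lemma4:
  fixes V :: "'a set" and E :: "'a \<Rightarrow> 'a \<Rightarrow> bool" and v :: "nat \<Rightarrow> 'a" and N :: nat
  assumes "finite_tree V E"
    and "N \<ge> 1"
    and "\<forall>n\<le>N. v n \<in> V"
    and "\<forall>n<N. E (v n) (v (Suc n))"
    and "inj_on v {0..N}"
  shows "access_time V E (v 0) (v N)
         = access_time V E (v 0) (v 1)
           + (\<Sum>n=1..N-1. access_time_edge V E (v (n - 1)) (v n) (v (Suc n)) - 1)"
  using assms(2-5)
proof (induction N rule: nat_induct_at_least)
  case base
  then show ?case by simp
next
  case (Suc N)
  have "access_time V E (v 0) (v (Suc N))
      = access_time V E (v 0) (v N) + (access_time_edge V E (v (N - 1)) (v N) (v (Suc N)) - 1)"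
    using access_time_path_Suc[OF assms(1) Suc.hyps] Suc.prems by blast
  also have "access_time V E (v 0) (v N)
      = access_time V E (v 0) (v 1)
        + (\<Sum>n=1..N-1. access_time_edge V E (v (n - 1)) (v n) (v (Suc n)) - 1)"
    using Suc.prems by (intro Suc.IH) (auto intro: inj_on_subset)
  also have "\<dots> + (access_time_edge V E (v (N - 1)) (v N) (v (Suc N)) - 1)
      = access_time V E (v 0) (v 1)
        + (\<Sum>n=1..Suc N - 1. access_time_edge V E (v (n - 1)) (v n) (v (Suc n)) - 1)"
    using Suc.hyps by (cases N) (simp_all add: sum.cl_ivl_Suc add.assoc)
  finally show ?case .
qed

end
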